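(* A graph $G$ has exactly one Grundy dominating set (i.e., is a unique Grundy domination graph) if and only if $G$ has no edges.
   Context: For a graph $G$, $N[v]$ denotes the closed neighborhood of $v$ (the vertex together with its neighbors). A sequence $(v_1,\ldots,v_k)$ of distinct vertices is a closed neighborhood sequence if $N[v_i]\setminus\bigcup_{j=1}^{i-1}N[v_j]\neq\emptyset$ for each $i\in[k]$. The Grundy domination number $\gamma_{gr}(G)$ is the maximum length of a closed neighborhood sequence; the set of vertices of such a maximum-length sequence is a Grundy dominating set. *)

theory Defs
  imports Main
begin

definition simple_graph :: "'a set \<Rightarrow> ('a \<Rightarrow> 'a \<Rightarrow> bool) \<Rightarrow> bool" where
  "simple_graph V E \<longleftrightarrow> finite V \<and> (\<forall>u v. E u v \<longrightarrow> u \<in> V \<and> v \<in> V)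
     \<and> (\<forall>u v. E u v \<longrightarrow> E v u) \<and> (\<forall>v. \<not> E v v)"

definition closed_nbh :: "'a set \<Rightarrow> ('a \<Rightarrow> 'a \<Rightarrow> bool) \<Rightarrow> 'a \<Rightarrow> 'a set" where
  "closed_nbh V E v = insert v {u \<in> V. E v u}"

definition closed_nbh_seq :: "'a set \<Rightarrow> ('a \<Rightarrow> 'a \<Rightarrow> bool) \<Rightarrow> 'a list \<Rightarrow> bool" where
  "closed_nbh_seq V E xs \<longleftrightarrow> distinct xs \<and> set xs \<subseteq> V \<and>
     (\<forall>i < length xs. closed_nbh V E (xs ! i) - (\<Union>j<i. closed_nbh V E (xs ! j)) \<noteq> {})"

definition grundy_dom_num :: "'a set \<Rightarrow> ('a \<Rightarrow> 'a \<Rightarrow> bool) \<Rightarrow> nat" where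
  "grundy_dom_num V E = Max {length xs | xs. closed_nbh_seq V E xs}"

definition grundy_dom_set :: "'a set \<Rightarrow> ('a \<Rightarrow> 'a \<Rightarrow> bool) \<Rightarrow> 'a set \<Rightarrow> bool" where
  "grundy_dom_set V E S \<longleftrightarrow> (\<exists>xs. closed_nbh_seq V E xs \<and>
     length xs = grundy_dom_num V E \<and> set xs = S)"

end

theory Submission
  imports Defs
begin

(* In an edgeless graph every enumeration of V is a closed neighbourhood sequence, so V is the
   only Grundy dominating set. Conversely, suppose there is an edge. A Grundy sequence dominates
   the graph, so it contains a non-isolated vertex; let v be the last one and x a vertex of N[v]
   not dominated before v. Then x also lies in N[y] for some non-isolated y different from v.
   Such a y does not occur in the sequence: not before v because x is new at v, not after v
   because only isolated vertices follow. Replacing v by y keeps x as the new vertex at that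
   position, and the isolated vertices after it stay new, so we obtain a second Grundy sequence
   whose vertex set contains y. *)

definition isolated :: "('a \<Rightarrow> 'a \<Rightarrow> bool) \<Rightarrow> 'a \<Rightarrow> bool" where
  "isolated E v \<longleftrightarrow> (\<forall>u. \<not> E v u)"

lemma closed_nbh_self: "v \<in> closed_nbh V E v"
  unfolding closed_nbh_def by simp

lemma isolated_not_in_closed_nbh:
  assumes "simple_graph V E" "isolated E v" "v \<noteq> w"
  shows "v \<notin> closed_nbh V E w"
  using assms unfolding simple_graph_def isolated_def closed_nbh_def by blast

lemma UN_less_length_nth: "(\<Union>j<length xs. f (xs ! j)) = (\<Union>x\<in>set xs. f x)"
  by (auto simp: set_conv_nth)

lemma closed_nbh_seq_Nil: "closed_nbh_seq V E []"
  unfolding closed_nbh_seq_def by simp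

lemma closed_nbh_seq_snoc_iff:
  "closed_nbh_seq V E (xs @ [w]) \<longleftrightarrow>
     closed_nbh_seq V E xs \<and> w \<in> V \<and> \<not> closed_nbh V E w \<subseteq> (\<Union>x\<in>set xs. closed_nbh V E x)"
proof -
  have footprint_prefix:
    "(\<forall>i < length (xs @ [w]). closed_nbh V E ((xs @ [w]) ! i)
        - (\<Union>j<i. closed_nbh V E ((xs @ [w]) ! j)) \<noteq> {}) \<longleftrightarrow>
     (\<forall>i < length xs. closed_nbh V E (xs ! i) - (\<Union>j<i. closed_nbh V E (xs ! j)) \<noteq> {}) \<and>
     \<not> closed_nbh V E w \<subseteq> (\<Union>x\<in>set xs. closed_nbh V E x)"
    by (auto simp: less_Suc_eq nth_append UN_less_length_nth[symmetric])
  have "w \<in> set xs \<Longrightarrow> closed_nbh V E w \<subseteq> (\<Union>x\<in>set xs. closed_nbh V E x)"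
    by blast
  then show ?thesis
    unfolding closed_nbh_seq_def footprint_prefix by auto
qed

lemma closed_nbh_seq_appendD:
  "closed_nbh_seq V E (xs @ ys) \<Longrightarrow> closed_nbh_seq V E xs"
proof (induction ys rule: rev_induct)
  case (snoc y ys)
  then show ?case
    using closed_nbh_seq_snoc_iff[of V E "xs @ ys" y] by simp
qed simp

lemma closed_nbh_seq_append_isolated:
  assumes "simple_graph V E" "closed_nbh_seq V E xs"
    and "distinct ys" "set ys \<subseteq> V" "set ys \<inter> set xs = {}" "\<forall>y\<in>set ys. isolated E y"
  shows "closed_nbh_seq V E (xs @ ys)"
  using assms(3-)
proof (induction ys rule: rev_induct)
  case Nil
  then show ?case using assms(2) by simp
next
  case (snoc y ys)
  have "closed_nbh_seq V E (xs @ ys)" "y \<in> V"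
    using snoc by simp_all
  moreover have "y \<notin> closed_nbh V E x" if "x \<in> set (xs @ ys)" for x
    using snoc.prems that isolated_not_in_closed_nbh[OF assms(1), of y x] by auto
  then have "\<not> closed_nbh V E y \<subseteq> (\<Union>x\<in>set (xs @ ys). closed_nbh V E x)"
    using closed_nbh_self by fast
  ultimately show ?case
    using closed_nbh_seq_snoc_iff[of V E "xs @ ys" y] by simp
qed

lemma closed_nbh_seq_length_le_card:
  assumes "finite V" "closed_nbh_seq V E xs"
  shows "length xs \<le> card V"
  using assms card_mono distinct_card unfolding closed_nbh_seq_def by metis

lemma finite_closed_nbh_seq_lengths:
  "finite V \<Longrightarrow> finite {length xs | xs. closed_nbh_seq V E xs}"
  by (rule finite_subset[of _ "{..card V}"]) (auto dest: closed_nbh_seq_length_le_card)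

lemma closed_nbh_seq_length_le_grundy_dom_num:
  "finite V \<Longrightarrow> closed_nbh_seq V E xs \<Longrightarrow> length xs \<le> grundy_dom_num V E"
  unfolding grundy_dom_num_def by (rule Max_ge) (auto simp: finite_closed_nbh_seq_lengths)

lemma ex_grundy_closed_nbh_seq:
  assumes "finite V"
  obtains xs where "closed_nbh_seq V E xs" "length xs = grundy_dom_num V E"
proof -
  have "grundy_dom_num V E \<in> {length xs | xs. closed_nbh_seq V E xs}"
    unfolding grundy_dom_num_def using assms closed_nbh_seq_Nil
    by (intro Max_in) (auto simp: finite_closed_nbh_seq_lengths)
  then obtain xs where "closed_nbh_seq V E xs" "grundy_dom_num V E = length xs"
    by blast
  then show ?thesis using that by simp
qed

lemma grundy_dom_num_le_card: "finite V \<Longrightarrow> grundy_dom_num V E \<le> card V"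
  by (metis ex_grundy_closed_nbh_seq closed_nbh_seq_length_le_card)

lemma grundy_closed_nbh_seq_dominates:
  assumes "finite V" "closed_nbh_seq V E xs" "length xs = grundy_dom_num V E" "w \<in> V"
  shows "w \<in> (\<Union>x\<in>set xs. closed_nbh V E x)"
proof (rule ccontr)
  assume "w \<notin> (\<Union>x\<in>set xs. closed_nbh V E x)"
  then have "\<not> closed_nbh V E w \<subseteq> (\<Union>x\<in>set xs. closed_nbh V E x)"
    using closed_nbh_self by (metis subsetD)
  then have "closed_nbh_seq V E (xs @ [w])"
    using assms(2,4) by (simp add: closed_nbh_seq_snoc_iff)
  from closed_nbh_seq_length_le_grundy_dom_num[OF assms(1) this] assms(3)
  show False by simp
qed

lemma grundy_dom_set_iff_eq_vertices:
  assumes "finite V" "closed_nbh_seq V E vs" "length vs = card V"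
  shows "grundy_dom_set V E S \<longleftrightarrow> S = V"
proof -
  have grundy: "grundy_dom_num V E = card V"
    using grundy_dom_num_le_card[OF assms(1), of E]
      closed_nbh_seq_length_le_grundy_dom_num[OF assms(1,2)] assms(3) by linarith
  have "set xs = V" if "closed_nbh_seq V E xs" "length xs = card V" for xs
    using that assms(1) card_subset_eq distinct_card unfolding closed_nbh_seq_def by metis
  then show ?thesis
    using assms(2,3) unfolding grundy_dom_set_def grundy by metis
qed

lemma edgeless_unique_grundy_dom_set:
  assumes "simple_graph V E" "\<forall>u v. \<not> E u v"
  shows "\<exists>!S. grundy_dom_set V E S"
proof -
  have "finite V" using assms(1) unfolding simple_graph_def by simp
  then obtain vs where vs: "set vs = V" "distinct vs" using finite_distinct_list by blast
  then have "closed_nbh_seq V E vs"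
    using closed_nbh_seq_append_isolated[OF assms(1) closed_nbh_seq_Nil, of vs] assms(2)
    unfolding isolated_def by simp
  then show ?thesis
    using grundy_dom_set_iff_eq_vertices \<open>finite V\<close> vs distinct_card by metis
qed

lemma ex_other_non_isolated_closed_nbh:
  assumes "simple_graph V E" "\<not> isolated E v" "x \<in> closed_nbh V E v"
  obtains y where "y \<noteq> v" "\<not> isolated E y" "y \<in> V" "x \<in> closed_nbh V E y"
proof -
  have sym: "E a b \<Longrightarrow> E b a" and irrefl: "\<not> E a a" and inV: "E a b \<Longrightarrow> a \<in> V" for a b
    using assms(1) unfolding simple_graph_def by blast+
  have "E y v \<and> x \<in> closed_nbh V E y" if "E v y" "x = v \<or> y = x" for y
    using that sym inV unfolding closed_nbh_def by auto
  moreover obtain y where "E v y" "x = v \<or> y = x"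
    using assms(2,3) unfolding isolated_def closed_nbh_def by blast
  ultimately show ?thesis
    using that[of y] irrefl inV unfolding isolated_def by metis
qed

lemma closed_nbh_seq_exchange_last_non_isolated:
  assumes "simple_graph V E" "closed_nbh_seq V E (pre @ v # post)"
    and "\<not> isolated E v" "\<forall>z\<in>set post. isolated E z"
  obtains y where "y \<notin> set (pre @ v # post)" "closed_nbh_seq V E (pre @ y # post)"
proof -
  have "closed_nbh_seq V E (pre @ [v])"
    using assms(2) closed_nbh_seq_appendD[of V E "pre @ [v]" post] by simp
  then have pre: "closed_nbh_seq V E pre"
    and "\<not> closed_nbh V E v \<subseteq> (\<Union>p\<in>set pre. closed_nbh V E p)"
    by (simp_all add: closed_nbh_seq_snoc_iff)
  then obtain x where x: "x \<in> closed_nbh V E v" "x \<notin> (\<Union>p\<in>set pre. closed_nbh V E p)"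
    by blast
  obtain y where y: "y \<noteq> v" "\<not> isolated E y" "y \<in> V" "x \<in> closed_nbh V E y"
    using ex_other_non_isolated_closed_nbh[OF assms(1,3) x(1)] by blast
  have "y \<notin> set pre" using x(2) y(4) by blast
  moreover have "y \<notin> set post" using assms(4) y(2) by blast
  ultimately have y_new: "y \<notin> set (pre @ v # post)" using y(1) by simp
  have "closed_nbh_seq V E (pre @ [y])"
    using pre x(2) y(3,4) by (auto simp: closed_nbh_seq_snoc_iff)
  moreover have "distinct post" "set post \<subseteq> V" "set post \<inter> set (pre @ [y]) = {}"
    using assms(2) y_new unfolding closed_nbh_seq_def by auto
  ultimately have "closed_nbh_seq V E ((pre @ [y]) @ post)"
    using closed_nbh_seq_append_isolated[OF assms(1)] assms(4) by blast
  then show ?thesis using that y_new by simp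
qed

lemma edge_two_grundy_dom_sets:
  assumes "simple_graph V E" "E u w"
  obtains S T where "grundy_dom_set V E S" "grundy_dom_set V E T" "S \<noteq> T"
proof -
  have "finite V" "u \<in> V" using assms unfolding simple_graph_def by blast+
  obtain xs where xs: "closed_nbh_seq V E xs" "length xs = grundy_dom_num V E"
    using ex_grundy_closed_nbh_seq[OF \<open>finite V\<close>] by blast
  then obtain s where "s \<in> set xs" "u \<in> closed_nbh V E s"
    using grundy_closed_nbh_seq_dominates[OF \<open>finite V\<close> _ _ \<open>u \<in> V\<close>] by blast
  then have "\<exists>s\<in>set xs. \<not> isolated E s"
    using assms(2) unfolding isolated_def closed_nbh_def by auto
  then obtain pre v post where split: "xs = pre @ v # post"
    and "\<not> isolated E v" "\<forall>z\<in>set post. isolated E z"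
    by (rule split_list_last_propE) auto
  then obtain y where y: "y \<notin> set xs" "closed_nbh_seq V E (pre @ y # post)"
    using closed_nbh_seq_exchange_last_non_isolated[OF assms(1)] xs(1) by metis
  have "grundy_dom_set V E (set xs)" "grundy_dom_set V E (set (pre @ y # post))"
    using xs y(2) split unfolding grundy_dom_set_def by auto
  moreover have "set xs \<noteq> set (pre @ y # post)" using y(1) by auto
  ultimately show ?thesis using that by blast
qed

theorem corollary4p3:
  fixes V :: "'a set" and E :: "'a \<Rightarrow> 'a \<Rightarrow> bool"
  assumes "simple_graph V E"
  shows "(\<exists>!S. grundy_dom_set V E S) \<longleftrightarrow> (\<forall>u v. \<not> E u v)"
proof
  assume "\<exists>!S. grundy_dom_set V E S"
  then show "\<forall>u v. \<not> E u v"
    using edge_two_grundy_dom_sets[OF assms] by metis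
next
  assume "\<forall>u v. \<not> E u v"
  then show "\<exists>!S. grundy_dom_set V E S"
    using edgeless_unique_grundy_dom_set[OF assms] by blast
qed

end
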